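(* Let $x,y\in S^d$ and $0\le\theta\le\pi$. If $\langle\bar x,\bar y\rangle<\cos\theta$, then $V_\kappa[\chi_{B(x,\theta)}](y)=0$.
   Context: Here $S^d$ is the unit sphere in $\mathbb R^{d+1}$, $\kappa=(\kappa_1,\dots,\kappa_{d+1})$ with $\kappa_i\ge0$, and $V_\kappa$ is the intertwining operator for the group $\mathbb Z_2^{d+1}$, given explicitly by $$V_\kappa f(x)=c_\kappa\int_{[-1,1]^{d+1}}f(x_1t_1,\dots,x_{d+1}t_{d+1})\prod_{i=1}^{d+1}(1+t_i)(1-t_i^2)^{\kappa_i-1}\,dt,$$ with $c_\kappa$ chosen so that $V_\kappa1=1$ (if some $\kappa_i=0$, the $i$-th factor integral is replaced by the limit $\frac12[g(1)+g(-1)]$). For $z\in\mathbb R^{d+1}$, $\bar z=(|z_1|,\dots,|z_{d+1}|)$. $B(x,\theta)=\{y\in\mathbb R^{d+1}:\|y\|\le1,\langle x,y\rangle\ge\cos\theta\}$ and $\chi_E$ is the indicator of $E$. *)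

theory Defs
  imports "HOL-Probability.Probability"
begin

text \<open>One-dimensional factor of the intertwining operator: for k > 0 the normalized
  measure with density (1+t)(1-t^2)^(k-1) on [-1,1]; for k = 0 the limit
  measure (delta_1 + delta_(-1))/2.\<close>

definition kappa_norm :: "real \<Rightarrow> real" where
  "kappa_norm k = (LBINT t=-1..1. (1 + t) * (1 - t\<^sup>2) powr (k - 1))"

definition kappa_measure :: "real \<Rightarrow> real measure" where
  "kappa_measure k =
     (if k = 0 then distr (measure_pmf (pmf_of_set {-1, 1::real})) borel (\<lambda>t. t)
      else density lborel (\<lambda>t. ennreal (indicator {-1<..<1} t *
                 ((1 + t) * (1 - t\<^sup>2) powr (k - 1)) / kappa_norm k)))"

text \<open>Intertwining operator V_kappa for Z_2^(d+1), with d+1 = CARD('n).\<close>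

definition V_kappa :: "('n::finite \<Rightarrow> real) \<Rightarrow> (real^'n \<Rightarrow> real) \<Rightarrow> real^'n \<Rightarrow> real" where
  "V_kappa \<kappa> f x =
     (\<integral>t. f (\<chi> i. x $ i * t i) \<partial>(PiM UNIV (\<lambda>i. kappa_measure (\<kappa> i))))"

definition vabs :: "real^'n \<Rightarrow> real^'n" where
  "vabs z = (\<chi> i. \<bar>z $ i\<bar>)"

definition capB :: "real^'n \<Rightarrow> real \<Rightarrow> (real^'n) set" where
  "capB x \<theta> = {y. norm y \<le> 1 \<and> inner x y \<ge> cos \<theta>}"

end

theory Submission
  imports Defs
begin

text \<open>Every one-dimensional factor of V_kappa lives on [-1,1], so almost surely the point
  (y_1 t_1, ..., y_(d+1) t_(d+1)) at which the indicator is evaluated satisfies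
  <x, y t> \<le> <|x|, |y|> < cos \<theta>; it therefore lies outside the cap B(x,\<theta>), and the
  integrand vanishes almost everywhere.\<close>

lemma (in product_sigma_finite) AE_PiM_all_components:
  assumes "finite I" and "\<And>i. i \<in> I \<Longrightarrow> AE s in M i. P i s"
  shows "AE t in PiM I M. \<forall>i\<in>I. P i (t i)"
proof -
  have "\<exists>N. N \<in> null_sets (M i) \<and> {s \<in> space (M i). \<not> P i s} \<subseteq> N" if "i \<in> I" for i
    using assms(2)[OF that] by (auto elim!: AE_E)
  then obtain N where N: "\<And>i. i \<in> I \<Longrightarrow> N i \<in> null_sets (M i)"
    and not_P: "\<And>i. i \<in> I \<Longrightarrow> {s \<in> space (M i). \<not> P i s} \<subseteq> N i"
    by metis
  define box where "box i = PiE I (\<lambda>j. if j = i then N i else space (M j))" for i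
  have box_null: "AE t in PiM I M. t \<notin> box i" if "i \<in> I" for i
  proof (rule AE_not_in, rule null_setsI)
    have sides: "(if j = i then N i else space (M j)) \<in> sets (M j)" for j
      using N[OF that] by auto
    show "box i \<in> sets (PiM I M)"
      unfolding box_def using assms(1) sides by (intro sets_PiM_I_finite) auto
    show "emeasure (PiM I M) (box i) = 0"
    proof -
      have "emeasure (PiM I M) (box i) = (\<Prod>j\<in>I. emeasure (M j) (if j = i then N i else space (M j)))"
        unfolding box_def by (rule emeasure_PiM[OF assms(1) sides])
      also have "\<dots> = 0"
        using N[OF that] that assms(1) by (intro prod_zero) auto
      finally show ?thesis .
    qed
  qed
  have "AE t in PiM I M. t \<in> space (PiM I M) \<and> (\<forall>i\<in>I. t \<notin> box i)"
    using assms(1) box_null by (intro AE_conjI AE_space AE_finite_allI) auto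
  then show ?thesis
  proof eventually_elim
    case (elim t)
    show ?case
    proof (rule ballI, rule ccontr)
      fix i assume "i \<in> I" and "\<not> P i (t i)"
      then have "t \<in> box i"
        using elim not_P[of i] by (auto simp: box_def space_PiM PiE_iff)
      with elim \<open>i \<in> I\<close> show False by blast
    qed
  qed
qed

lemma sigma_finite_kappa_measure: "sigma_finite_measure (kappa_measure k)"
proof (cases "k = 0")
  case True
  have "prob_space (distr (measure_pmf (pmf_of_set {-1, 1::real})) borel (\<lambda>t. t))"
    by (intro measure_pmf.prob_space_distr) auto
  with True show ?thesis
    unfolding kappa_measure_def by (simp add: prob_space_imp_sigma_finite)
next
  case False
  then show ?thesis
    unfolding kappa_measure_def
    by (simp add: sigma_finite_measure.sigma_finite_iff_density_finite[OF sigma_finite_lborel])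
qed

lemma AE_kappa_measure_abs_le_1: "AE s in kappa_measure k. \<bar>s\<bar> \<le> 1"
proof (cases "k = 0")
  case True
  have "AE s in measure_pmf (pmf_of_set {-1, 1::real}). \<bar>s\<bar> \<le> 1"
    using AE_measure_pmf[of "pmf_of_set {-1, 1::real}"] by eventually_elim auto
  with True show ?thesis
    unfolding kappa_measure_def by (simp add: AE_distr_iff)
next
  case False
  then show ?thesis
    unfolding kappa_measure_def
    by (simp add: AE_density) (auto simp: indicator_def)
qed

lemma inner_scaled_le_inner_vabs:
  fixes x y :: "real^'n"
  assumes "\<And>i. \<bar>t i\<bar> \<le> 1"
  shows "inner x (\<chi> i. y $ i * t i) \<le> inner (vabs x) (vabs y)"
proof -
  have "x $ i * (y $ i * t i) \<le> \<bar>x $ i\<bar> * \<bar>y $ i\<bar>" for i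
  proof -
    have "x $ i * (y $ i * t i) \<le> \<bar>x $ i\<bar> * \<bar>y $ i\<bar> * \<bar>t i\<bar>"
      by (metis abs_ge_self abs_mult mult.assoc)
    also have "\<dots> \<le> \<bar>x $ i\<bar> * \<bar>y $ i\<bar>"
      using assms[of i] by (simp add: mult_left_le)
    finally show ?thesis .
  qed
  then show ?thesis
    by (simp add: inner_vec_def vabs_def sum_mono)
qed

theorem lemma3p2:
  fixes \<kappa> :: "'n::finite \<Rightarrow> real" and x y :: "real^'n" and \<theta> :: real
  assumes "\<And>i. \<kappa> i \<ge> 0"
    and "norm x = 1" and "norm y = 1"
    and "0 \<le> \<theta>" and "\<theta> \<le> pi"
    and "inner (vabs x) (vabs y) < cos \<theta>"
  shows "V_kappa \<kappa> (indicator (capB x \<theta>)) y = 0"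
proof -
  interpret product_sigma_finite "\<lambda>i. kappa_measure (\<kappa> i)"
    by (simp add: product_sigma_finite_def sigma_finite_kappa_measure)
  have "AE t in PiM UNIV (\<lambda>i. kappa_measure (\<kappa> i)). \<forall>i\<in>UNIV. \<bar>t i\<bar> \<le> 1"
    by (intro AE_PiM_all_components AE_kappa_measure_abs_le_1) simp
  then have "AE t in PiM UNIV (\<lambda>i. kappa_measure (\<kappa> i)).
      indicator (capB x \<theta>) (\<chi> i. y $ i * t i) = (0::real)"
  proof eventually_elim
    case (elim t)
    then have "inner x (\<chi> i. y $ i * t i) < cos \<theta>"
      using inner_scaled_le_inner_vabs[of t x y] assms(6) by simp
    then show ?case by (simp add: capB_def)
  qed
  then show ?thesis
    unfolding V_kappa_def by (rule integral_eq_zero_AE)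
qed

end
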